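(* Let $\Gamma=(G,w,\ell)$ be a tropical curve and $P\in\mathcal C_G$. Then $[T_P]$ is a theta-characteristic of $\Gamma$, and the map $$\beta\colon \mathcal C_G\longrightarrow T^{\mathrm{trop}}_\Gamma,\qquad P\longmapsto [T_P]$$ is a bijection.
   Context: A tropical curve is a triple $\Gamma=(G,w,\ell)$ where $G=(V,E)$ is a finite connected graph (loops and multiple edges allowed), $w\colon V\to\mathbb Z_{\ge 0}$ is a weight function with $2w(v)-2+\deg_G(v)>0$ for all $v$ (degrees count loops twice), and $\ell\colon E\to\mathbb R_{>0}$. Its genus is $g=\sum_v w(v)+|E|-|V|+1$. $\Gamma$ is regarded as a metric space by identifying each edge $e$ with a segment (a circle if $e$ is a loop) of length $\ell(e)$, glued at vertices; $p_e$ denotes the mid-point of $e$. Divisors, rational functions, $\operatorname{div}(f)$ (sum of outgoing slopes at each point) and $\operatorname{Pic}(\Gamma)=\operatorname{Div}(\Gamma)/\{\operatorname{div}(f)\}$ are as usual in tropical geometry; $[D]$ is the class of $D$. The canonical divisor is $K_\Gamma=\sum_{v\in V}(2w(v)-2+\deg_G(v))v$. A theta-characteristic of $\Gamma$ is a class $[D]\in\operatorname{Pic}(\Gamma)$ with $[2D]=[K_\Gamma]$; their set is $T^{\mathrm{trop}}_\Gamma$. $\mathcal C_G$ is the set of subsets $P\subseteq E$ such that every vertex has even degree in the subgraph spanned by $P$ (loops counting twice). For $P\in\mathcal C_G$, $$T_P:=\sum_{v\in V}\Big(\frac{\deg_P(v)}{2}-1+w(v)\Big)v+\sum_{e\in E\setminus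 P}p_e.$$ *)

theory Defs
  imports "HOL-Analysis.Analysis"
begin

text \<open>A graph is given by a vertex set V, an edge set E and a function ends
assigning to every edge an (arbitrarily oriented) pair of endpoints
(tail, head); a loop has tail = head.  The orientation is only an auxiliary
parametrisation of the edges.\<close>

definition tl_v :: "('e \<Rightarrow> 'v \<times> 'v) \<Rightarrow> 'e \<Rightarrow> 'v" where
  "tl_v ends e = fst (ends e)"

definition hd_v :: "('e \<Rightarrow> 'v \<times> 'v) \<Rightarrow> 'e \<Rightarrow> 'v" where
  "hd_v ends e = snd (ends e)"

definition deg_in :: "'e set \<Rightarrow> ('e \<Rightarrow> 'v \<times> 'v) \<Rightarrow> 'v \<Rightarrow> nat" where
  "deg_in P ends v = card {e \<in> P. tl_v ends e = v} + card {e \<in> P. hd_v ends e = v}"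

definition adjacent :: "'e set \<Rightarrow> ('e \<Rightarrow> 'v \<times> 'v) \<Rightarrow> ('v \<times> 'v) set" where
  "adjacent E ends = {(u, v). \<exists>e\<in>E. ends e = (u, v) \<or> ends e = (v, u)}"

definition tropical_curve ::
  "'v set \<Rightarrow> 'e set \<Rightarrow> ('e \<Rightarrow> 'v \<times> 'v) \<Rightarrow> ('v \<Rightarrow> nat) \<Rightarrow> ('e \<Rightarrow> real) \<Rightarrow> bool" where
  "tropical_curve V E ends w len \<longleftrightarrow>
     finite V \<and> finite E \<and> V \<noteq> {} \<and>
     (\<forall>e\<in>E. tl_v ends e \<in> V \<and> hd_v ends e \<in> V) \<and>
     (\<forall>u\<in>V. \<forall>v\<in>V. (u, v) \<in> (adjacent E ends)\<^sup>*) \<and>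
     (\<forall>v\<in>V. 2 * int (w v) - 2 + int (deg_in E ends v) > 0) \<and>
     (\<forall>e\<in>E. len e > 0)"

text \<open>Points of the metric space: vertices, and interior points of edges,
an interior point of e being given by its distance t \<in> (0, len e) from the tail.\<close>
datatype ('v, 'e) point = Vtx 'v | Pt 'e real

definition points :: "'v set \<Rightarrow> 'e set \<Rightarrow> ('e \<Rightarrow> real) \<Rightarrow> ('v, 'e) point set" where
  "points V E len = Vtx ` V \<union> {Pt e t | e t. e \<in> E \<and> 0 < t \<and> t < len e}"

definition is_divisor ::
  "'v set \<Rightarrow> 'e set \<Rightarrow> ('e \<Rightarrow> real) \<Rightarrow> (('v, 'e) point \<Rightarrow> int) \<Rightarrow> bool" where
  "is_divisor V E len D \<longleftrightarrow> finite {x. D x \<noteq> 0} \<and> {x. D x \<noteq> 0} \<subseteq> points V E len"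

definition pl_int :: "real \<Rightarrow> real \<Rightarrow> (real \<Rightarrow> real) \<Rightarrow> bool" where
  "pl_int a b g \<longleftrightarrow> (\<exists>k::nat. \<exists>p::nat \<Rightarrow> real. p 0 = a \<and> p k = b \<and>
      (\<forall>i<k. p i < p (Suc i)) \<and>
      (\<forall>i<k. \<exists>m::int. \<exists>c::real. \<forall>t\<in>{p i..p (Suc i)}. g t = c + of_int m * t))"

definition edge_fun ::
  "('e \<Rightarrow> 'v \<times> 'v) \<Rightarrow> ('e \<Rightarrow> real) \<Rightarrow> (('v, 'e) point \<Rightarrow> real) \<Rightarrow> 'e \<Rightarrow> real \<Rightarrow> real" where
  "edge_fun ends len f e t =
     (if t = 0 then f (Vtx (tl_v ends e))
      else if t = len e then f (Vtx (hd_v ends e))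
      else f (Pt e t))"

definition rational_fun ::
  "'e set \<Rightarrow> ('e \<Rightarrow> 'v \<times> 'v) \<Rightarrow> ('e \<Rightarrow> real) \<Rightarrow> (('v, 'e) point \<Rightarrow> real) \<Rightarrow> bool" where
  "rational_fun E ends len f \<longleftrightarrow> (\<forall>e\<in>E. pl_int 0 (len e) (edge_fun ends len f e))"

definition rslope :: "(real \<Rightarrow> real) \<Rightarrow> real \<Rightarrow> int" where
  "rslope g t = (THE s::int. (g has_real_derivative of_int s) (at_right t))"

definition lslope :: "(real \<Rightarrow> real) \<Rightarrow> real \<Rightarrow> int" where
  "lslope g t = (THE s::int. (g has_real_derivative of_int s) (at_left t))"

text \<open>div(f): sum of the outgoing slopes at every point.\<close>
definition divf ::
  "'v set \<Rightarrow> 'e set \<Rightarrow> ('e \<Rightarrow> 'v \<times> 'v) \<Rightarrow> ('e \<Rightarrow> real) \<Rightarrow> (('v, 'e) point \<Rightarrow> real)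
     \<Rightarrow> ('v, 'e) point \<Rightarrow> int" where
  "divf V E ends len f x = (case x of
      Vtx v \<Rightarrow> if v \<in> V then
          (\<Sum>e\<in>{e\<in>E. tl_v ends e = v}. rslope (edge_fun ends len f e) 0)
        - (\<Sum>e\<in>{e\<in>E. hd_v ends e = v}. lslope (edge_fun ends len f e) (len e))
        else 0
    | Pt e t \<Rightarrow> if e \<in> E \<and> 0 < t \<and> t < len e then
          rslope (edge_fun ends len f e) t - lslope (edge_fun ends len f e) t
        else 0)"

definition principal ::
  "'v set \<Rightarrow> 'e set \<Rightarrow> ('e \<Rightarrow> 'v \<times> 'v) \<Rightarrow> ('e \<Rightarrow> real) \<Rightarrow> (('v, 'e) point \<Rightarrow> int) \<Rightarrow> bool" where
  "principal V E ends len D \<longleftrightarrow>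
     (\<exists>f. rational_fun E ends len f \<and> D = divf V E ends len f)"

definition lin_equiv ::
  "'v set \<Rightarrow> 'e set \<Rightarrow> ('e \<Rightarrow> 'v \<times> 'v) \<Rightarrow> ('e \<Rightarrow> real)
     \<Rightarrow> (('v, 'e) point \<Rightarrow> int) \<Rightarrow> (('v, 'e) point \<Rightarrow> int) \<Rightarrow> bool" where
  "lin_equiv V E ends len D D' \<longleftrightarrow> principal V E ends len (\<lambda>x. D x - D' x)"

definition cls ::
  "'v set \<Rightarrow> 'e set \<Rightarrow> ('e \<Rightarrow> 'v \<times> 'v) \<Rightarrow> ('e \<Rightarrow> real)
     \<Rightarrow> (('v, 'e) point \<Rightarrow> int) \<Rightarrow> (('v, 'e) point \<Rightarrow> int) set" where
  "cls V E ends len D = {D'. is_divisor V E len D' \<and> lin_equiv V E ends len D D'}"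

definition canonical ::
  "'v set \<Rightarrow> 'e set \<Rightarrow> ('e \<Rightarrow> 'v \<times> 'v) \<Rightarrow> ('v \<Rightarrow> nat) \<Rightarrow> ('v, 'e) point \<Rightarrow> int" where
  "canonical V E ends w x = (case x of
      Vtx v \<Rightarrow> if v \<in> V then 2 * int (w v) - 2 + int (deg_in E ends v) else 0
    | Pt e t \<Rightarrow> 0)"

definition theta_chars ::
  "'v set \<Rightarrow> 'e set \<Rightarrow> ('e \<Rightarrow> 'v \<times> 'v) \<Rightarrow> ('v \<Rightarrow> nat) \<Rightarrow> ('e \<Rightarrow> real)
     \<Rightarrow> (('v, 'e) point \<Rightarrow> int) set set" where
  "theta_chars V E ends w len =
     {cls V E ends len D | D. is_divisor V E len D \<and>
        lin_equiv V E ends len (\<lambda>x. 2 * D x) (canonical V E ends w)}"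

definition even_subgraphs :: "'v set \<Rightarrow> 'e set \<Rightarrow> ('e \<Rightarrow> 'v \<times> 'v) \<Rightarrow> 'e set set" where
  "even_subgraphs V E ends = {P. P \<subseteq> E \<and> (\<forall>v\<in>V. even (deg_in P ends v))}"

text \<open>T_P; deg_P(v)/2 is an integer for P in C_G.\<close>
definition T_div ::
  "'v set \<Rightarrow> 'e set \<Rightarrow> ('e \<Rightarrow> 'v \<times> 'v) \<Rightarrow> ('v \<Rightarrow> nat) \<Rightarrow> ('e \<Rightarrow> real) \<Rightarrow> 'e set
     \<Rightarrow> ('v, 'e) point \<Rightarrow> int" where
  "T_div V E ends w len P x = (case x of
      Vtx v \<Rightarrow> if v \<in> V then int (deg_in P ends v div 2) - 1 + int (w v) else 0
    | Pt e t \<Rightarrow> if e \<in> E - P \<and> t = len e / 2 then 1 else 0)"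

end

theory Submission
  imports Defs
begin

text \<open>The tent function of an edge set \<open>S\<close> (the distance to the nearer
endpoint on the edges of \<open>S\<close>, zero elsewhere) has divisor
\<open>\<Sum>\<^sub>v deg\<^sub>S(v) v - 2 \<Sum>\<^sub>e\<^sub>\<in>\<^sub>S p\<^sub>e\<close>; for \<open>S = E - P\<close> this is \<open>K - 2T\<^sub>P\<close>, so \<open>[T\<^sub>P]\<close> is a
theta-characteristic.

Injectivity: if \<open>T\<^sub>P - T\<^sub>Q = div F\<close>, then \<open>h = 2F + tent(E - P) - tent(E - Q)\<close> has zero
divisor. Such an \<open>h\<close> has a constant slope \<open>s\<^sub>e\<close> along every edge, these slopes are
conserved at every vertex and \<open>h(head e) - h(tail e) = s\<^sub>e \<ell>(e)\<close>, so
\<open>\<Sum>\<^sub>e s\<^sub>e\<^sup>2 \<ell>(e) = \<Sum>\<^sub>v h(v) (inflow - outflow) = 0\<close> and all slopes vanish. But the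
initial slope of \<open>h\<close> on an edge of the symmetric difference of \<open>P\<close> and \<open>Q\<close> is odd.

Surjectivity: if \<open>2D - K = div g\<^sub>1\<close>, then \<open>g = g\<^sub>1 + tent E\<close> has \<open>div g = 2(D - T\<^sub>\<emptyset>)\<close>, so
the slope of \<open>g\<close> has a constant parity along every edge. The edges of odd slope form an
even subgraph \<open>P\<close>, and \<open>(g - tent P)/2\<close> has integer slopes and divisor \<open>D - T\<^sub>P\<close>.\<close>

section \<open>Piecewise linear functions on an interval\<close>

text \<open>Unlike \<^const>\<open>pl_int\<close>, the breakpoints form an unordered set, so that a common
refinement of two functions is the union of their breakpoint sets.\<close>

definition pl_int_breaks :: "real \<Rightarrow> real \<Rightarrow> (real \<Rightarrow> real) \<Rightarrow> real set \<Rightarrow> bool" where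
  "pl_int_breaks a b g S \<longleftrightarrow> finite S \<and> a \<in> S \<and> b \<in> S \<and>
     (\<forall>x y. a \<le> x \<longrightarrow> x < y \<longrightarrow> y \<le> b \<longrightarrow> {x<..<y} \<inter> S = {} \<longrightarrow>
        (\<exists>m::int. \<exists>c. \<forall>t\<in>{x..y}. g t = c + of_int m * t))"

lemma pl_int_breaks_piece:
  assumes "pl_int_breaks a b g S" "a \<le> x" "x < y" "y \<le> b" "{x<..<y} \<inter> S = {}"
  obtains m c where "\<forall>t\<in>{x..y}. g t = c + of_int m * t"
  using assms unfolding pl_int_breaks_def by blast

lemma rslope_affine:
  assumes g: "\<forall>u\<in>{x..y}. g u = c + of_int m * u" and t: "x \<le> t" "t < y"
  shows "rslope g t = m"
proof -
  have "eventually (\<lambda>u. (g u - g t) / (u - t) = of_int m) (at_right t)"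
  proof (rule eventually_at_rightI[of t y])
    fix u assume "u \<in> {t<..<y}"
    with g t show "(g u - g t) / (u - t) = of_int m" by (auto simp: field_simps)
  qed (use t in auto)
  then have d: "(g has_real_derivative of_int m) (at_right t)"
    unfolding has_field_derivative_iff by (rule tendsto_eventually)
  show ?thesis unfolding rslope_def
  proof (rule the_equality)
    fix s assume "(g has_real_derivative of_int s) (at_right t)"
    with d have "(of_int s :: real) = of_int m"
      unfolding has_field_derivative_iff by (intro tendsto_unique[of "at_right t"]) auto
    then show "s = m" by simp
  qed (fact d)
qed

lemma lslope_affine:
  assumes g: "\<forall>u\<in>{x..y}. g u = c + of_int m * u" and t: "x < t" "t \<le> y"
  shows "lslope g t = m"
proof -
  have "eventually (\<lambda>u. (g u - g t) / (u - t) = of_int m) (at_left t)"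
  proof (rule eventually_at_leftI[of x t])
    fix u assume "u \<in> {x<..<t}"
    with g t show "(g u - g t) / (u - t) = of_int m" by (auto simp: field_simps)
  qed (use t in auto)
  then have d: "(g has_real_derivative of_int m) (at_left t)"
    unfolding has_field_derivative_iff by (rule tendsto_eventually)
  show ?thesis unfolding lslope_def
  proof (rule the_equality)
    fix s assume "(g has_real_derivative of_int s) (at_left t)"
    with d have "(of_int s :: real) = of_int m"
      unfolding has_field_derivative_iff by (intro tendsto_unique[of "at_left t"]) auto
    then show "s = m" by simp
  qed (fact d)
qed

lemma finite_gap_right:
  fixes S :: "'a::linorder set"
  assumes "finite S" "b \<in> S" "t < b"
  shows "\<exists>y\<in>S. t < y \<and> y \<le> b \<and> {t<..<y} \<inter> S = {}"
proof -
  define y where "y = Min (S \<inter> {t<..b})"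
  have "y \<in> S \<inter> {t<..b}" unfolding y_def using assms by (intro Min_in) auto
  moreover have "y \<le> s" if "s \<in> S \<inter> {t<..b}" for s
    unfolding y_def using assms that by simp
  ultimately show ?thesis by force
qed

lemma finite_gap_left:
  fixes S :: "'a::linorder set"
  assumes "finite S" "a \<in> S" "a < t"
  shows "\<exists>y\<in>S. a \<le> y \<and> y < t \<and> {y<..<t} \<inter> S = {}"
proof -
  define y where "y = Max (S \<inter> {a..<t})"
  have "y \<in> S \<inter> {a..<t}" unfolding y_def using assms by (intro Max_in) auto
  moreover have "s \<le> y" if "s \<in> S \<inter> {a..<t}" for s
    unfolding y_def using assms that by simp
  ultimately show ?thesis by force
qed

lemma pl_int_breaks_induct:
  assumes S: "pl_int_breaks a b g S" and x: "a < x" "x \<le> b"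
    and piece: "\<And>y x m c. a \<le> y \<Longrightarrow> y < x \<Longrightarrow> x \<le> b \<Longrightarrow> (a < y \<Longrightarrow> Q y) \<Longrightarrow>
      \<forall>t\<in>{y..x}. g t = c + of_int m * t \<Longrightarrow> Q x"
  shows "Q x"
  using x
proof (induction "card (S \<inter> {a<..<x})" arbitrary: x rule: less_induct)
  case less
  have fin: "finite S" "a \<in> S" using S by (auto simp: pl_int_breaks_def)
  then obtain y where y: "y \<in> S" "a \<le> y" "y < x" "{y<..<x} \<inter> S = {}"
    using finite_gap_left less.prems by blast
  then obtain m c where "\<forall>t\<in>{y..x}. g t = c + of_int m * t"
    using pl_int_breaks_piece[OF S] less.prems by blast
  moreover have "Q y" if "a < y"
  proof (rule less.hyps)
    show "card (S \<inter> {a<..<y}) < card (S \<inter> {a<..<x})"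
      using fin y that by (intro psubset_card_mono) auto
  qed (use that y less.prems in auto)
  ultimately show ?case using piece y less.prems by blast
qed

lemma pl_int_breaks_slopes_dvd:
  assumes S: "pl_int_breaks a b g S" and ab: "a < b"
    and kinks: "\<forall>t\<in>{a<..<b}. d dvd rslope g t - lslope g t"
  shows "\<forall>t\<in>{a..<b}. d dvd rslope g t - rslope g a" "d dvd lslope g b - rslope g a"
proof -
  have "(\<forall>t\<in>{a..<b}. d dvd rslope g t - rslope g a) \<and> d dvd lslope g b - rslope g a"
  proof (rule pl_int_breaks_induct[OF S ab order_refl,
        where Q = "\<lambda>x. (\<forall>t\<in>{a..<x}. d dvd rslope g t - rslope g a) \<and> d dvd lslope g x - rslope g a"])
    fix y x m c
    assume y: "a \<le> y" "y < x" "x \<le> b" and IH: "a < y \<Longrightarrow>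
        (\<forall>t\<in>{a..<y}. d dvd rslope g t - rslope g a) \<and> d dvd lslope g y - rslope g a"
      and g: "\<forall>t\<in>{y..x}. g t = c + of_int m * t"
    have r: "rslope g t = m" if "y \<le> t" "t < x" for t
      using rslope_affine[OF g that] .
    have l: "lslope g x = m" using lslope_affine[OF g y(2) order_refl] .
    have m: "d dvd m - rslope g a"
    proof (cases "a < y")
      case True
      have "d dvd (rslope g y - lslope g y) + (lslope g y - rslope g a)"
        using kinks IH[OF True] True y by (intro dvd_add) auto
      then show ?thesis using r[OF order_refl y(2)] by simp
    next
      case False
      then show ?thesis using r[OF order_refl y(2)] y(1) by simp
    qed
    have "d dvd rslope g t - rslope g a" if "a \<le> t" "t < x" for t
    proof (cases "t < y")
      case True
      then show ?thesis using IH that y(1) by fastforce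
    next
      case False
      then show ?thesis using r[of t] m that by simp
    qed
    then show "(\<forall>t\<in>{a..<x}. d dvd rslope g t - rslope g a) \<and> d dvd lslope g x - rslope g a"
      using l m by simp
  qed
  then show "\<forall>t\<in>{a..<b}. d dvd rslope g t - rslope g a" "d dvd lslope g b - rslope g a"
    by auto
qed

lemma pl_int_breaks_affine:
  assumes S: "pl_int_breaks a b g S" and ab: "a < b"
    and no_kinks: "\<forall>t\<in>{a<..<b}. rslope g t = lslope g t"
  shows "g b = g a + of_int (rslope g a) * (b - a)" "lslope g b = rslope g a"
proof -
  have "g b = g a + of_int (rslope g a) * (b - a) \<and> lslope g b = rslope g a"
  proof (rule pl_int_breaks_induct[OF S ab order_refl,
        where Q = "\<lambda>x. g x = g a + of_int (rslope g a) * (x - a) \<and> lslope g x = rslope g a"])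
    fix y x m c
    assume y: "a \<le> y" "y < x" "x \<le> b"
      and IH: "a < y \<Longrightarrow> g y = g a + of_int (rslope g a) * (y - a) \<and> lslope g y = rslope g a"
      and g: "\<forall>t\<in>{y..x}. g t = c + of_int m * t"
    have ry: "rslope g y = m" using rslope_affine[OF g order_refl y(2)] .
    have lx: "lslope g x = m" using lslope_affine[OF g y(2) order_refl] .
    have "g y = g a + of_int m * (y - a) \<and> m = rslope g a"
    proof (cases "a < y")
      case True
      then have "rslope g y = lslope g y" using no_kinks y by auto
      then show ?thesis using IH[OF True] ry by auto
    qed (use y(1) ry in auto)
    then have gy: "g y = g a + of_int m * (y - a)" and m: "m = rslope g a" by auto
    have "g x = g y + of_int m * (x - y)" using g y by (simp add: algebra_simps)
    then show "g x = g a + of_int (rslope g a) * (x - a) \<and> lslope g x = rslope g a"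
      using gy m lx by (simp add: algebra_simps)
  qed
  then show "g b = g a + of_int (rslope g a) * (b - a)" "lslope g b = rslope g a"
    by auto
qed

lemma pl_int_imp_breaks:
  assumes "pl_int a b g"
  shows "\<exists>S. pl_int_breaks a b g S"
proof -
  obtain k p where p: "p 0 = a" "p k = b" "\<forall>i<k. p i < p (Suc i)"
    "\<forall>i<k. \<exists>m::int. \<exists>c. \<forall>t\<in>{p i..p (Suc i)}. g t = c + of_int m * t"
    using assms unfolding pl_int_def by blast
  have "\<exists>m::int. \<exists>c. \<forall>t\<in>{x..y}. g t = c + of_int m * t"
    if xy: "a \<le> x" "x < y" "y \<le> b" "{x<..<y} \<inter> p ` {..k} = {}" for x y
  proof -
    define J where "J = {j. j \<le> k \<and> p j \<le> x}"
    define i where "i = Max J"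
    have J: "finite J" "0 \<in> J" unfolding J_def using p(1) xy(1) by auto
    then have "i \<in> J" unfolding i_def by (intro Max_in) auto
    then have i: "i \<le> k" "p i \<le> x" unfolding J_def by auto
    then have "i < k" using p(2) xy by (cases "i = k") auto
    have "x < p (Suc i)"
    proof (rule ccontr)
      assume "\<not> x < p (Suc i)"
      then have "Suc i \<in> J" using \<open>i < k\<close> unfolding J_def by auto
      then have "Suc i \<le> i" unfolding i_def by (rule Max_ge[OF J(1)])
      then show False by simp
    qed
    have "y \<le> p (Suc i)"
    proof (rule ccontr)
      assume "\<not> y \<le> p (Suc i)"
      then have "p (Suc i) \<in> {x<..<y} \<inter> p ` {..k}" using \<open>x < p (Suc i)\<close> \<open>i < k\<close> by auto
      then show False using xy(4) by blast
    qed
    then show ?thesis using p(4) \<open>i < k\<close> i by fastforce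
  qed
  then have "pl_int_breaks a b g (p ` {..k})" using p(1,2) by (auto simp: pl_int_breaks_def)
  then show ?thesis ..
qed

lemma pl_int_breaks_imp_pl_int:
  assumes S: "pl_int_breaks a b g S" and ab: "a < b"
  shows "pl_int a b g"
proof (rule pl_int_breaks_induct[OF S ab order_refl, where Q = "\<lambda>x. pl_int a x g"])
  fix y x m c
  assume y: "a \<le> y" "y < x" and IH: "a < y \<Longrightarrow> pl_int a y g"
    and g: "\<forall>t\<in>{y..x}. g t = c + of_int m * t"
  show "pl_int a x g"
  proof (cases "a < y")
    case True
    then obtain k p where p: "p 0 = a" "p k = y" "\<forall>i<k. p i < p (Suc i)"
      "\<forall>i<k. \<exists>m::int. \<exists>c. \<forall>t\<in>{p i..p (Suc i)}. g t = c + of_int m * t"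
      using IH unfolding pl_int_def by blast
    define p' where "p' = p(Suc k := x)"
    have "p' 0 = a" "p' (Suc k) = x" using p(1) by (auto simp: p'_def)
    moreover have "p' i < p' (Suc i) \<and> (\<exists>m::int. \<exists>c. \<forall>t\<in>{p' i..p' (Suc i)}. g t = c + of_int m * t)"
      if "i < Suc k" for i
    proof (cases "i < k")
      case True
      then show ?thesis using p(3,4) by (simp add: p'_def)
    next
      case False
      then have "i = k" using that by simp
      then show ?thesis using p(2) y g by (auto simp: p'_def)
    qed
    ultimately show ?thesis unfolding pl_int_def by blast
  next
    case False
    then show ?thesis unfolding pl_int_def using y g
      by (intro exI[of _ "Suc 0"] exI[of _ "(\<lambda>i. a)(Suc 0 := x)"]) auto
  qed
qed

lemma pl_int_breaks_lincomb:
  assumes "pl_int_breaks a b f S" "pl_int_breaks a b g S'"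
  shows "pl_int_breaks a b (\<lambda>t. of_int p * f t + of_int q * g t) (S \<union> S')"
proof -
  have "\<exists>m::int. \<exists>c. \<forall>t\<in>{x..y}. of_int p * f t + of_int q * g t = c + of_int m * t"
    if xy: "a \<le> x" "x < y" "y \<le> b" "{x<..<y} \<inter> (S \<union> S') = {}" for x y
  proof -
    have "{x<..<y} \<inter> S = {}" "{x<..<y} \<inter> S' = {}" using xy(4) by auto
    then obtain m c m' c' where "\<forall>t\<in>{x..y}. f t = c + of_int m * t" "\<forall>t\<in>{x..y}. g t = c' + of_int m' * t"
      using pl_int_breaks_piece assms xy(1-3) by metis
    then show ?thesis
      by (intro exI[of _ "p * m + q * m'"] exI[of _ "of_int p * c + of_int q * c'"])
        (auto simp: algebra_simps)
  qed
  then show ?thesis using assms by (auto simp: pl_int_breaks_def)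
qed

lemma rslope_lincomb:
  assumes "pl_int_breaks a b f S" "pl_int_breaks a b g S'" "a \<le> t" "t < b"
  shows "rslope (\<lambda>t. of_int p * f t + of_int q * g t) t = p * rslope f t + q * rslope g t"
proof -
  obtain y where y: "t < y" "y \<le> b" "{t<..<y} \<inter> (S \<union> S') = {}"
    using finite_gap_right[of "S \<union> S'" b t] assms by (auto simp: pl_int_breaks_def)
  have "{t<..<y} \<inter> S = {}" "{t<..<y} \<inter> S' = {}" using y(3) by auto
  then obtain m c m' c' where f: "\<forall>u\<in>{t..y}. f u = c + of_int m * u"
    and g: "\<forall>u\<in>{t..y}. g u = c' + of_int m' * u"
    using pl_int_breaks_piece assms(1,2) assms(3) y(1,2) by metis
  have "\<forall>u\<in>{t..y}. of_int p * f u + of_int q * g u =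
      (of_int p * c + of_int q * c') + of_int (p * m + q * m') * u"
    using f g by (auto simp: algebra_simps)
  from rslope_affine[OF this order_refl y(1)] rslope_affine[OF f order_refl y(1)]
    rslope_affine[OF g order_refl y(1)] show ?thesis by simp
qed

lemma lslope_lincomb:
  assumes "pl_int_breaks a b f S" "pl_int_breaks a b g S'" "a < t" "t \<le> b"
  shows "lslope (\<lambda>t. of_int p * f t + of_int q * g t) t = p * lslope f t + q * lslope g t"
proof -
  obtain y where y: "a \<le> y" "y < t" "{y<..<t} \<inter> (S \<union> S') = {}"
    using finite_gap_left[of "S \<union> S'" a t] assms by (auto simp: pl_int_breaks_def)
  have "{y<..<t} \<inter> S = {}" "{y<..<t} \<inter> S' = {}" using y(3) by auto
  then obtain m c m' c' where f: "\<forall>u\<in>{y..t}. f u = c + of_int m * u"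
    and g: "\<forall>u\<in>{y..t}. g u = c' + of_int m' * u"
    using pl_int_breaks_piece assms(1,2) assms(4) y(1,2) by metis
  have "\<forall>u\<in>{y..t}. of_int p * f u + of_int q * g u =
      (of_int p * c + of_int q * c') + of_int (p * m + q * m') * u"
    using f g by (auto simp: algebra_simps)
  from lslope_affine[OF this y(2) order_refl] lslope_affine[OF f y(2) order_refl]
    lslope_affine[OF g y(2) order_refl] show ?thesis by simp
qed

lemma pl_int_breaks_half:
  assumes S: "pl_int_breaks a b g S" and even: "\<forall>t\<in>{a..<b}. even (rslope g t)"
  shows "pl_int_breaks a b (\<lambda>t. g t / 2) S"
proof -
  have "\<exists>m::int. \<exists>c. \<forall>t\<in>{x..y}. g t / 2 = c + of_int m * t"
    if xy: "a \<le> x" "x < y" "y \<le> b" "{x<..<y} \<inter> S = {}" for x y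
  proof -
    obtain m c where g: "\<forall>t\<in>{x..y}. g t = c + of_int m * t"
      using pl_int_breaks_piece[OF S xy] .
    then have "even m" using even rslope_affine[OF g order_refl] xy by fastforce
    then obtain q where "m = 2 * q" by blast
    then show ?thesis using g by (intro exI[of _ q] exI[of _ "c / 2"]) auto
  qed
  then show ?thesis using S by (auto simp: pl_int_breaks_def)
qed

section \<open>Restriction to edges and tent functions\<close>

lemma edge_fun_lincomb:
  "edge_fun ends len (\<lambda>x. of_int p * f x + of_int q * g x) e =
     (\<lambda>t. of_int p * edge_fun ends len f e t + of_int q * edge_fun ends len g e t)"
  by (simp add: edge_fun_def fun_eq_iff)

lemma edge_fun_half: "edge_fun ends len (\<lambda>x. f x / 2) e = (\<lambda>t. edge_fun ends len f e t / 2)"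
  by (simp add: edge_fun_def fun_eq_iff)

definition tent :: "('e \<Rightarrow> real) \<Rightarrow> 'e set \<Rightarrow> ('v, 'e) point \<Rightarrow> real" where
  "tent len S x = (case x of Vtx v \<Rightarrow> 0 | Pt e t \<Rightarrow> if e \<in> S then min t (len e - t) else 0)"

lemma tent_Diff: "S \<subseteq> T \<Longrightarrow> tent len (T - S) x = tent len T x - tent len S x"
  by (auto simp: tent_def split: point.split)

lemma edge_fun_tent_affine:
  assumes "0 < len e"
  shows "\<forall>t\<in>{0..len e / 2}. edge_fun ends len (tent len S) e t = 0 + of_int (if e \<in> S then 1 else 0) * t"
    and "\<forall>t\<in>{len e / 2..len e}. edge_fun ends len (tent len S) e t =
      (if e \<in> S then len e else 0) + of_int (if e \<in> S then -1 else 0) * t"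
  using assms by (auto simp: edge_fun_def tent_def min_def)

lemma pl_int_breaks_tent:
  assumes "0 < len e"
  shows "pl_int_breaks 0 (len e) (edge_fun ends len (tent len S) e) {0, len e / 2, len e}"
proof -
  note aff = edge_fun_tent_affine[where len=len and e=e and ends=ends and S=S, OF assms]
  have "\<exists>m::int. \<exists>c. \<forall>t\<in>{x..y}. edge_fun ends len (tent len S) e t = c + of_int m * t"
    if xy: "0 \<le> x" "x < y" "y \<le> len e" "{x<..<y} \<inter> {0, len e / 2, len e} = {}" for x y
  proof -
    have "y \<le> len e / 2 \<or> len e / 2 \<le> x" using xy(4) by fastforce
    then show ?thesis
    proof
      assume "y \<le> len e / 2"
      then have "{x..y} \<subseteq> {0..len e / 2}" using xy by auto
      then show ?thesis using aff(1) by blast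
    next
      assume "len e / 2 \<le> x"
      then have "{x..y} \<subseteq> {len e / 2..len e}" using xy by auto
      then show ?thesis using aff(2) by blast
    qed
  qed
  then show ?thesis by (auto simp: pl_int_breaks_def)
qed

lemma rslope_tent:
  assumes "0 \<le> t" "t < len e"
  shows "rslope (edge_fun ends len (tent len S) e) t =
    (if e \<in> S then (if t < len e / 2 then 1 else -1) else 0)"
proof -
  have L: "0 < len e" using assms by simp
  note aff = edge_fun_tent_affine[where len=len and e=e and ends=ends and S=S, OF L]
  show ?thesis
  proof (cases "t < len e / 2")
    case True
    then show ?thesis using rslope_affine[OF aff(1)] assms by simp
  next
    case False
    then show ?thesis using rslope_affine[OF aff(2)] assms by simp
  qed
qed

lemma rslope_tent_0:
  "0 < len e \<Longrightarrow> rslope (edge_fun ends len (tent len S) e) 0 = (if e \<in> S then 1 else 0)"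
  by (simp add: rslope_tent)

lemma lslope_tent:
  assumes "0 < t" "t \<le> len e"
  shows "lslope (edge_fun ends len (tent len S) e) t =
    (if e \<in> S then (if t \<le> len e / 2 then 1 else -1) else 0)"
proof -
  have L: "0 < len e" using assms by simp
  note aff = edge_fun_tent_affine[where len=len and e=e and ends=ends and S=S, OF L]
  show ?thesis
  proof (cases "t \<le> len e / 2")
    case True
    then show ?thesis using lslope_affine[OF aff(1)] assms by simp
  next
    case False
    then show ?thesis using lslope_affine[OF aff(2)] assms by simp
  qed
qed

lemma deg_in_Diff:
  fixes A B :: "'e set" and v :: 'v
  assumes "finite A" "B \<subseteq> A"
  shows "deg_in A ends v = deg_in B ends v + deg_in (A - B) ends v"
proof -
  have "card {e\<in>A. k e = v} = card {e\<in>B. k e = v} + card {e\<in>A - B. k e = v}" for k :: "'e \<Rightarrow> 'v"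
    using assms by (subst card_Un_disjoint[symmetric]) (auto intro: arg_cong[where f = card] finite_subset)
  then show ?thesis unfolding deg_in_def by simp
qed

definition tent_divisor :: "'v set \<Rightarrow> ('e \<Rightarrow> 'v \<times> 'v) \<Rightarrow> ('e \<Rightarrow> real) \<Rightarrow> 'e set
    \<Rightarrow> ('v, 'e) point \<Rightarrow> int" where
  "tent_divisor V ends len S x = (case x of
      Vtx v \<Rightarrow> if v \<in> V then int (deg_in S ends v) else 0
    | Pt e t \<Rightarrow> if e \<in> S \<and> t = len e / 2 then -2 else 0)"

section \<open>Rational functions and divisors on a metric graph\<close>

locale metric_graph =
  fixes V :: "'v set" and E :: "'e set" and ends :: "'e \<Rightarrow> 'v \<times> 'v" and len :: "'e \<Rightarrow> real"
  assumes finite_V: "finite V" and finite_E: "finite E"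
    and tail_in_V: "e \<in> E \<Longrightarrow> tl_v ends e \<in> V" and head_in_V: "e \<in> E \<Longrightarrow> hd_v ends e \<in> V"
    and len_pos: "e \<in> E \<Longrightarrow> 0 < len e"

lemma tropical_curve_imp_metric_graph:
  "tropical_curve V E ends w len \<Longrightarrow> metric_graph V E ends len"
  unfolding tropical_curve_def by unfold_locales auto

context metric_graph
begin

lemma rational_fun_iff_breaks:
  "rational_fun E ends len f \<longleftrightarrow> (\<forall>e\<in>E. \<exists>S. pl_int_breaks 0 (len e) (edge_fun ends len f e) S)"
proof -
  have "pl_int 0 (len e) g \<longleftrightarrow> (\<exists>S. pl_int_breaks 0 (len e) g S)" if "e \<in> E" for e g
    using pl_int_imp_breaks pl_int_breaks_imp_pl_int len_pos[OF that] by blast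
  then show ?thesis unfolding rational_fun_def by blast
qed

lemma rational_fun_lincomb:
  assumes "rational_fun E ends len f" "rational_fun E ends len g"
  shows "rational_fun E ends len (\<lambda>x. of_int p * f x + of_int q * g x)"
  using assms unfolding rational_fun_iff_breaks edge_fun_lincomb by (blast intro: pl_int_breaks_lincomb)

lemma rational_fun_tent: "rational_fun E ends len (tent len S)"
  unfolding rational_fun_iff_breaks using pl_int_breaks_tent[where len=len and ends=ends and S=S, OF len_pos] by blast

lemma rational_fun_half:
  assumes "rational_fun E ends len f"
    and "\<forall>e\<in>E. \<forall>t\<in>{0..<len e}. even (rslope (edge_fun ends len f e) t)"
  shows "rational_fun E ends len (\<lambda>x. f x / 2)"
  using assms unfolding rational_fun_iff_breaks edge_fun_half by (blast intro: pl_int_breaks_half)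

lemma edge_rslope_lincomb:
  assumes "rational_fun E ends len f" "rational_fun E ends len g" "e \<in> E" "0 \<le> t" "t < len e"
  shows "rslope (edge_fun ends len (\<lambda>x. of_int p * f x + of_int q * g x) e) t =
    p * rslope (edge_fun ends len f e) t + q * rslope (edge_fun ends len g e) t"
proof -
  obtain S S' where "pl_int_breaks 0 (len e) (edge_fun ends len f e) S"
    "pl_int_breaks 0 (len e) (edge_fun ends len g e) S'"
    using assms(1-3) unfolding rational_fun_iff_breaks by blast
  then show ?thesis unfolding edge_fun_lincomb using assms(4,5) by (rule rslope_lincomb)
qed

lemma edge_lslope_lincomb:
  assumes "rational_fun E ends len f" "rational_fun E ends len g" "e \<in> E" "0 < t" "t \<le> len e"
  shows "lslope (edge_fun ends len (\<lambda>x. of_int p * f x + of_int q * g x) e) t =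
    p * lslope (edge_fun ends len f e) t + q * lslope (edge_fun ends len g e) t"
proof -
  obtain S S' where "pl_int_breaks 0 (len e) (edge_fun ends len f e) S"
    "pl_int_breaks 0 (len e) (edge_fun ends len g e) S'"
    using assms(1-3) unfolding rational_fun_iff_breaks by blast
  then show ?thesis unfolding edge_fun_lincomb using assms(4,5) by (rule lslope_lincomb)
qed

lemma divf_lincomb:
  assumes f: "rational_fun E ends len f" and g: "rational_fun E ends len g"
  shows "divf V E ends len (\<lambda>x. of_int p * f x + of_int q * g x) =
    (\<lambda>x. p * divf V E ends len f x + q * divf V E ends len g x)"
proof
  fix x
  note r = edge_rslope_lincomb[OF f g, of _ _ p q] and l = edge_lslope_lincomb[OF f g, of _ _ p q]
  show "divf V E ends len (\<lambda>x. of_int p * f x + of_int q * g x) x =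
    p * divf V E ends len f x + q * divf V E ends len g x"
  proof (cases x)
    case (Vtx v)
    have "(\<Sum>e\<in>{e\<in>E. tl_v ends e = v}. rslope (edge_fun ends len (\<lambda>x. of_int p * f x + of_int q * g x) e) 0) =
      p * (\<Sum>e\<in>{e\<in>E. tl_v ends e = v}. rslope (edge_fun ends len f e) 0) +
      q * (\<Sum>e\<in>{e\<in>E. tl_v ends e = v}. rslope (edge_fun ends len g e) 0)"
      by (simp add: sum_distrib_left sum.distrib[symmetric] r len_pos)
    moreover have "(\<Sum>e\<in>{e\<in>E. hd_v ends e = v}. lslope (edge_fun ends len (\<lambda>x. of_int p * f x + of_int q * g x) e) (len e)) =
      p * (\<Sum>e\<in>{e\<in>E. hd_v ends e = v}. lslope (edge_fun ends len f e) (len e)) +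
      q * (\<Sum>e\<in>{e\<in>E. hd_v ends e = v}. lslope (edge_fun ends len g e) (len e))"
      by (simp add: sum_distrib_left sum.distrib[symmetric] l len_pos)
    ultimately show ?thesis by (simp add: Vtx divf_def algebra_simps)
  next
    case (Pt e t)
    show ?thesis
    proof (cases "e \<in> E \<and> 0 < t \<and> t < len e")
      case True
      then show ?thesis using r[of e t] l[of e t] by (simp add: Pt divf_def right_diff_distrib)
    next
      case False
      then have "divf V E ends len h x = 0" for h by (auto simp: Pt divf_def)
      then show ?thesis by simp
    qed
  qed
qed

lemma divf_scale:
  assumes "rational_fun E ends len f"
  shows "divf V E ends len (\<lambda>x. of_int k * f x) = (\<lambda>x. k * divf V E ends len f x)"
  using divf_lincomb[OF assms assms, of k 0] by simp

lemma divf_tent: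
  assumes "S \<subseteq> E"
  shows "divf V E ends len (tent len S) = tent_divisor V ends len S"
proof
  fix x
  show "divf V E ends len (tent len S) x = tent_divisor V ends len S x"
  proof (cases x)
    case (Vtx v)
    have "(\<Sum>e\<in>{e\<in>E. tl_v ends e = v}. rslope (edge_fun ends len (tent len S) e) 0) =
        (\<Sum>e\<in>{e\<in>E. tl_v ends e = v}. if e \<in> S then 1 else 0)"
      by (intro sum.cong) (auto simp: rslope_tent len_pos)
    also have "\<dots> = int (card ({e\<in>E. tl_v ends e = v} \<inter> S))"
      using finite_E by (simp add: sum.If_cases)
    also have "{e\<in>E. tl_v ends e = v} \<inter> S = {e\<in>S. tl_v ends e = v}"
      using assms by auto
    finally have tl: "(\<Sum>e\<in>{e\<in>E. tl_v ends e = v}. rslope (edge_fun ends len (tent len S) e) 0) =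
        int (card {e\<in>S. tl_v ends e = v})" .
    have "(\<Sum>e\<in>{e\<in>E. hd_v ends e = v}. lslope (edge_fun ends len (tent len S) e) (len e)) =
        (\<Sum>e\<in>{e\<in>E. hd_v ends e = v}. if e \<in> S then -1 else 0)"
      by (intro sum.cong) (auto simp: lslope_tent len_pos)
    also have "\<dots> = - int (card ({e\<in>E. hd_v ends e = v} \<inter> S))"
      using finite_E by (simp add: sum.If_cases)
    also have "{e\<in>E. hd_v ends e = v} \<inter> S = {e\<in>S. hd_v ends e = v}"
      using assms by auto
    finally show ?thesis using tl by (simp add: Vtx divf_def tent_divisor_def deg_in_def)
  next
    case (Pt e t)
    show ?thesis
    proof (cases "e \<in> E \<and> 0 < t \<and> t < len e")
      case True
      then show ?thesis by (simp add: Pt divf_def tent_divisor_def rslope_tent lslope_tent)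
    next
      case False
      then show ?thesis using assms len_pos[of e] by (auto simp: Pt divf_def tent_divisor_def)
    qed
  qed
qed

lemma principal_zero: "principal V E ends len (\<lambda>x. 0)"
proof -
  have "rational_fun E ends len (tent len {})" by (rule rational_fun_tent)
  moreover have "divf V E ends len (tent len {}) = (\<lambda>x. 0)"
    by (auto simp: divf_tent tent_divisor_def deg_in_def split: point.split)
  ultimately show ?thesis unfolding principal_def by metis
qed

lemma principal_diff:
  assumes "principal V E ends len D" "principal V E ends len D'"
  shows "principal V E ends len (\<lambda>x. D x - D' x)"
proof -
  obtain f f' where f: "rational_fun E ends len f" "D = divf V E ends len f"
    and f': "rational_fun E ends len f'" "D' = divf V E ends len f'"
    using assms unfolding principal_def by blast
  let ?g = "\<lambda>x. of_int 1 * f x + of_int (-1) * f' x"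
  have "rational_fun E ends len ?g" using rational_fun_lincomb f(1) f'(1) .
  moreover have "(\<lambda>x. D x - D' x) = divf V E ends len ?g"
    using divf_lincomb[OF f(1) f'(1), of 1 "-1"] f(2) f'(2) by simp
  ultimately show ?thesis unfolding principal_def by blast
qed

lemma lin_equiv_sym: "lin_equiv V E ends len D D' \<Longrightarrow> lin_equiv V E ends len D' D"
  unfolding lin_equiv_def using principal_diff[OF principal_zero] by fastforce

lemma lin_equiv_trans:
  "lin_equiv V E ends len D D' \<Longrightarrow> lin_equiv V E ends len D' D'' \<Longrightarrow> lin_equiv V E ends len D D''"
  unfolding lin_equiv_def using principal_diff[OF principal_zero] principal_diff by fastforce

lemma cls_eq_iff:
  assumes "is_divisor V E len D'"
  shows "cls V E ends len D = cls V E ends len D' \<longleftrightarrow> lin_equiv V E ends len D D'"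
proof
  assume eq: "cls V E ends len D = cls V E ends len D'"
  have "D' \<in> cls V E ends len D'"
    using assms principal_zero by (simp add: cls_def lin_equiv_def)
  then have "D' \<in> cls V E ends len D" unfolding eq .
  then show "lin_equiv V E ends len D D'" by (simp add: cls_def)
next
  assume "lin_equiv V E ends len D D'"
  then show "cls V E ends len D = cls V E ends len D'"
    unfolding cls_def using lin_equiv_sym lin_equiv_trans by blast
qed

lemma edge_affine_if_divf_zero:
  assumes h: "rational_fun E ends len h" and e: "e \<in> E"
    and harm: "\<forall>t\<in>{0<..<len e}. divf V E ends len h (Pt e t) = 0"
  shows "lslope (edge_fun ends len h e) (len e) = rslope (edge_fun ends len h e) 0"
    and "h (Vtx (hd_v ends e)) = h (Vtx (tl_v ends e)) + of_int (rslope (edge_fun ends len h e) 0) * len e"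
proof -
  obtain S where S: "pl_int_breaks 0 (len e) (edge_fun ends len h e) S"
    using h e unfolding rational_fun_iff_breaks by blast
  have "\<forall>t\<in>{0<..<len e}. rslope (edge_fun ends len h e) t = lslope (edge_fun ends len h e) t"
    using harm e by (auto simp: divf_def)
  note aff = pl_int_breaks_affine[OF S len_pos[OF e] this]
  show "lslope (edge_fun ends len h e) (len e) = rslope (edge_fun ends len h e) 0" by (fact aff(2))
  show "h (Vtx (hd_v ends e)) = h (Vtx (tl_v ends e)) + of_int (rslope (edge_fun ends len h e) 0) * len e"
    using aff(1) len_pos[OF e] by (simp add: edge_fun_def)
qed

lemma sum_edges_by_endpoint:
  fixes s :: "'e \<Rightarrow> 'a::comm_semiring_0"
  assumes "\<And>e. e \<in> E \<Longrightarrow> k e \<in> V"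
  shows "(\<Sum>e\<in>E. s e * \<phi> (k e)) = (\<Sum>v\<in>V. \<phi> v * (\<Sum>e\<in>{e\<in>E. k e = v}. s e))"
proof -
  have "k ` E \<subseteq> V" using assms by blast
  then have "(\<Sum>e\<in>E. s e * \<phi> (k e)) = (\<Sum>v\<in>V. \<Sum>e\<in>{e\<in>E. k e = v}. s e * \<phi> (k e))"
    by (rule sum.group[OF finite_E finite_V, symmetric])
  also have "\<dots> = (\<Sum>v\<in>V. \<phi> v * (\<Sum>e\<in>{e\<in>E. k e = v}. s e))"
    by (auto simp: sum_distrib_left ac_simps intro!: sum.cong)
  finally show ?thesis .
qed

lemma conserved_gradient_flow_zero:
  fixes s :: "'e \<Rightarrow> real" and \<phi> :: "'v \<Rightarrow> real"
  assumes conserved: "\<And>v. v \<in> V \<Longrightarrow>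
      (\<Sum>e\<in>{e\<in>E. tl_v ends e = v}. s e) = (\<Sum>e\<in>{e\<in>E. hd_v ends e = v}. s e)"
    and gradient: "\<And>e. e \<in> E \<Longrightarrow> \<phi> (hd_v ends e) - \<phi> (tl_v ends e) = s e * len e"
    and "e \<in> E"
  shows "s e = 0"
proof -
  have "(\<Sum>e\<in>E. s e * s e * len e) = (\<Sum>e\<in>E. s e * \<phi> (hd_v ends e) - s e * \<phi> (tl_v ends e))"
  proof (rule sum.cong)
    fix e assume "e \<in> E"
    then show "s e * s e * len e = s e * \<phi> (hd_v ends e) - s e * \<phi> (tl_v ends e)"
      using gradient[of e] by (simp add: right_diff_distrib[symmetric])
  qed simp
  also have "\<dots> = (\<Sum>v\<in>V. \<phi> v * (\<Sum>e\<in>{e\<in>E. hd_v ends e = v}. s e))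
      - (\<Sum>v\<in>V. \<phi> v * (\<Sum>e\<in>{e\<in>E. tl_v ends e = v}. s e))"
    by (simp add: sum_subtractf sum_edges_by_endpoint head_in_V tail_in_V)
  also have "\<dots> = 0"
    using conserved by (simp cong: sum.cong)
  finally have "(\<Sum>e\<in>E. s e * s e * len e) = 0" .
  moreover have "0 \<le> s e * s e * len e" if "e \<in> E" for e
    using len_pos[OF that] by simp
  ultimately have "\<forall>e\<in>E. s e * s e * len e = 0" by (simp add: sum_nonneg_eq_0_iff[OF finite_E])
  then show ?thesis using len_pos[OF \<open>e \<in> E\<close>] \<open>e \<in> E\<close> by auto
qed

lemma divf_zero_imp_slopes_zero:
  assumes h: "rational_fun E ends len h" and harm: "\<And>x. divf V E ends len h x = 0" and "e \<in> E"
  shows "rslope (edge_fun ends len h e) 0 = 0"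
proof -
  define s where "s e = real_of_int (rslope (edge_fun ends len h e) 0)" for e
  have edge: "of_int (lslope (edge_fun ends len h e) (len e)) = s e"
    "h (Vtx (hd_v ends e)) - h (Vtx (tl_v ends e)) = s e * len e" if "e \<in> E" for e
    using edge_affine_if_divf_zero[OF h that] harm by (simp_all add: s_def)
  have "(\<Sum>e\<in>{e\<in>E. tl_v ends e = v}. s e) = (\<Sum>e\<in>{e\<in>E. hd_v ends e = v}. s e)" if "v \<in> V" for v
  proof -
    have "(\<Sum>e\<in>{e\<in>E. tl_v ends e = v}. s e) =
        of_int (\<Sum>e\<in>{e\<in>E. hd_v ends e = v}. lslope (edge_fun ends len h e) (len e))"
      using harm[of "Vtx v"] that by (simp add: divf_def s_def flip: of_int_sum)
    also have "\<dots> = (\<Sum>e\<in>{e\<in>E. hd_v ends e = v}. s e)"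
      using edge(1) by simp
    finally show ?thesis .
  qed
  from conserved_gradient_flow_zero[where \<phi> = "\<lambda>v. h (Vtx v)", OF this edge(2) \<open>e \<in> E\<close>]
  have "s e = 0" .
  then show ?thesis by (simp add: s_def)
qed

lemma even_divf_imp_slopes_cong:
  assumes g: "rational_fun E ends len g" and ev: "\<And>x. even (divf V E ends len g x)" and e: "e \<in> E"
  shows "\<forall>t\<in>{0..<len e}. even (rslope (edge_fun ends len g e) t - rslope (edge_fun ends len g e) 0)"
    and "even (lslope (edge_fun ends len g e) (len e) - rslope (edge_fun ends len g e) 0)"
proof -
  obtain S where S: "pl_int_breaks 0 (len e) (edge_fun ends len g e) S"
    using g e unfolding rational_fun_iff_breaks by blast
  have "\<forall>t\<in>{0<..<len e}. 2 dvd rslope (edge_fun ends len g e) t - lslope (edge_fun ends len g e) t"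
  proof
    fix t assume "t \<in> {0<..<len e}"
    then show "2 dvd rslope (edge_fun ends len g e) t - lslope (edge_fun ends len g e) t"
      using ev[of "Pt e t"] e by (simp add: divf_def)
  qed
  from pl_int_breaks_slopes_dvd[OF S len_pos[OF e] this]
  show "\<forall>t\<in>{0..<len e}. even (rslope (edge_fun ends len g e) t - rslope (edge_fun ends len g e) 0)"
    and "even (lslope (edge_fun ends len g e) (len e) - rslope (edge_fun ends len g e) 0)" .
qed

lemma odd_slope_edges_even_subgraph:
  assumes g: "rational_fun E ends len g" and ev: "\<And>x. even (divf V E ends len g x)"
  shows "{e\<in>E. odd (rslope (edge_fun ends len g e) 0)} \<in> even_subgraphs V E ends"
proof -
  define r where "r e = rslope (edge_fun ends len g e) 0" for e
  define P where "P = {e\<in>E. odd (r e)}"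
  have "even (deg_in P ends v)" if "v \<in> V" for v
  proof -
    let ?T = "{e\<in>E. tl_v ends e = v}" and ?H = "{e\<in>E. hd_v ends e = v}"
    have "even ((\<Sum>e\<in>?T. r e) - (\<Sum>e\<in>?H. lslope (edge_fun ends len g e) (len e)))"
      using ev[of "Vtx v"] that by (simp add: divf_def r_def)
    moreover have "even (\<Sum>e\<in>?H. lslope (edge_fun ends len g e) (len e) - r e)"
      using even_divf_imp_slopes_cong(2)[OF g ev] by (auto simp: r_def intro!: dvd_sum)
    ultimately have "even ((\<Sum>e\<in>?T. r e) + (\<Sum>e\<in>?H. r e))"
      by (simp add: sum_subtractf)
    moreover have "{e\<in>?T. odd (r e)} = {e\<in>P. tl_v ends e = v}" "{e\<in>?H. odd (r e)} = {e\<in>P. hd_v ends e = v}"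
      by (auto simp: P_def)
    ultimately show ?thesis
      using finite_E by (simp add: deg_in_def even_sum_iff)
  qed
  then show ?thesis by (auto simp: even_subgraphs_def P_def r_def)
qed

lemma rational_fun_half_minus_tent:
  assumes g: "rational_fun E ends len g" and ev: "\<And>x. even (divf V E ends len g x)"
    and P: "P = {e\<in>E. odd (rslope (edge_fun ends len g e) 0)}"
  shows "rational_fun E ends len (\<lambda>x. (of_int 1 * g x + of_int (-1) * tent len P x) / 2)"
proof (rule rational_fun_half)
  show f: "rational_fun E ends len (\<lambda>x. of_int 1 * g x + of_int (-1) * tent len P x)"
    by (intro rational_fun_lincomb g rational_fun_tent)
  show "\<forall>e\<in>E. \<forall>t\<in>{0..<len e}.
      even (rslope (edge_fun ends len (\<lambda>x. of_int 1 * g x + of_int (-1) * tent len P x) e) t)"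
  proof (intro ballI)
    fix e t assume e: "e \<in> E" and t: "t \<in> {0..<len e}"
    have "even (rslope (edge_fun ends len g e) t - rslope (edge_fun ends len g e) 0)"
      using even_divf_imp_slopes_cong(1)[OF g ev e] t by blast
    moreover have "odd (rslope (edge_fun ends len (tent len P) e) t) \<longleftrightarrow> e \<in> P"
      using t by (simp add: rslope_tent)
    moreover have "rslope (edge_fun ends len (\<lambda>x. of_int 1 * g x + of_int (-1) * tent len P x) e) t =
        1 * rslope (edge_fun ends len g e) t + (-1) * rslope (edge_fun ends len (tent len P) e) t"
      by (rule edge_rslope_lincomb[OF g rational_fun_tent e]) (use t in auto)
    ultimately show "even (rslope (edge_fun ends len (\<lambda>x. of_int 1 * g x + of_int (-1) * tent len P x) e) t)"
      using e by (simp add: P)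
  qed
qed

section \<open>Theta-characteristics\<close>

lemma divf_tent_complement:
  assumes "Q \<in> even_subgraphs V E ends"
  shows "divf V E ends len (tent len (E - Q)) =
    (\<lambda>x. canonical V E ends w x - 2 * T_div V E ends w len Q x)"
proof -
  have "tent_divisor V ends len (E - Q) x = canonical V E ends w x - 2 * T_div V E ends w len Q x" for x
  proof (cases x)
    case (Vtx v)
    show ?thesis
    proof (cases "v \<in> V")
      case True
      then have "even (deg_in Q ends v)" "Q \<subseteq> E" using assms by (auto simp: even_subgraphs_def)
      then show ?thesis using True deg_in_Diff[OF finite_E \<open>Q \<subseteq> E\<close>, of ends v]
        by (auto simp: Vtx tent_divisor_def canonical_def T_div_def elim!: evenE)
    qed (simp add: Vtx tent_divisor_def canonical_def T_div_def)
  qed (auto simp: tent_divisor_def canonical_def T_div_def)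
  then show ?thesis using divf_tent[OF Diff_subset] by auto
qed

lemma is_divisor_T_div: "is_divisor V E len (T_div V E ends w len Q)"
proof -
  let ?supp = "Vtx ` V \<union> (\<lambda>e. Pt e (len e / 2)) ` E"
  have "{x. T_div V E ends w len Q x \<noteq> 0} \<subseteq> ?supp"
  proof
    fix x assume "x \<in> {x. T_div V E ends w len Q x \<noteq> 0}"
    then show "x \<in> ?supp" by (cases x) (auto simp: T_div_def split: if_splits)
  qed
  moreover have "?supp \<subseteq> points V E len"
  proof -
    have "Pt e (len e / 2) \<in> points V E len" if "e \<in> E" for e
    proof -
      have "0 < len e / 2" "len e / 2 < len e" using len_pos[OF that] by auto
      then show ?thesis using that unfolding points_def by blast
    qed
    moreover have "Vtx ` V \<subseteq> points V E len" by (auto simp: points_def)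
    ultimately show ?thesis by blast
  qed
  moreover have "finite ?supp" using finite_V finite_E by simp
  ultimately show ?thesis unfolding is_divisor_def by (meson finite_subset order_trans)
qed

lemma T_div_theta_char:
  assumes "Q \<in> even_subgraphs V E ends"
  shows "cls V E ends len (T_div V E ends w len Q) \<in> theta_chars V E ends w len"
proof -
  have "principal V E ends len (divf V E ends len (tent len (E - Q)))"
    using rational_fun_tent unfolding principal_def by blast
  from principal_diff[OF principal_zero this]
  have "principal V E ends len (\<lambda>x. 2 * T_div V E ends w len Q x - canonical V E ends w x)"
    by (simp add: divf_tent_complement[OF assms, where w = w])
  then show ?thesis
    using is_divisor_T_div unfolding theta_chars_def lin_equiv_def by blast
qed

lemma T_div_lin_equiv_imp_eq:
  assumes P: "P \<in> even_subgraphs V E ends" and Q: "Q \<in> even_subgraphs V E ends"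
    and equiv: "lin_equiv V E ends len (T_div V E ends w len P) (T_div V E ends w len Q)"
  shows "P = Q"
proof -
  obtain F where F: "rational_fun E ends len F"
    and divF: "(\<lambda>x. T_div V E ends w len P x - T_div V E ends w len Q x) = divf V E ends len F"
    using equiv unfolding lin_equiv_def principal_def by blast
  define G where "G = (\<lambda>x. of_int 2 * F x + of_int 1 * tent len (E - P) x)"
  define h where "h = (\<lambda>x. of_int 1 * G x + of_int (-1) * tent len (E - Q) x)"
  have G: "rational_fun E ends len G" unfolding G_def by (intro rational_fun_lincomb F rational_fun_tent)
  have h: "rational_fun E ends len h" unfolding h_def by (intro rational_fun_lincomb G rational_fun_tent)
  have divG: "divf V E ends len G =
      (\<lambda>x. 2 * divf V E ends len F x + 1 * divf V E ends len (tent len (E - P)) x)"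
    unfolding G_def by (rule divf_lincomb[OF F rational_fun_tent])
  have divh: "divf V E ends len h =
      (\<lambda>x. 1 * divf V E ends len G x + (-1) * divf V E ends len (tent len (E - Q)) x)"
    unfolding h_def by (rule divf_lincomb[OF G rational_fun_tent])
  have "divf V E ends len h x = 0" for x
    using fun_cong[OF divF, of x]
    by (simp add: divh divG divf_tent_complement[OF P, where w = w] divf_tent_complement[OF Q, where w = w])
  note slopes_zero = divf_zero_imp_slopes_zero[OF h this]
  have "e \<in> P \<longleftrightarrow> e \<in> Q" if e: "e \<in> E" for e
  proof -
    have "rslope (edge_fun ends len G e) 0 =
        2 * rslope (edge_fun ends len F e) 0 + 1 * rslope (edge_fun ends len (tent len (E - P)) e) 0"
      unfolding G_def by (rule edge_rslope_lincomb[OF F rational_fun_tent e]) (use len_pos[OF e] in auto)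
    moreover have "rslope (edge_fun ends len h e) 0 =
        1 * rslope (edge_fun ends len G e) 0 + (-1) * rslope (edge_fun ends len (tent len (E - Q)) e) 0"
      unfolding h_def by (rule edge_rslope_lincomb[OF G rational_fun_tent e]) (use len_pos[OF e] in auto)
    ultimately have "2 * rslope (edge_fun ends len F e) 0 + (if e \<in> P then 0 else 1) = (if e \<in> Q then 0 else 1)"
      using slopes_zero[OF e] len_pos[OF e] e by (simp add: rslope_tent_0 split: if_splits)
    then show ?thesis by (auto split: if_splits; presburger)
  qed
  then show ?thesis using P Q by (auto simp: even_subgraphs_def)
qed

lemma theta_char_lin_equiv_T_div:
  assumes K: "lin_equiv V E ends len (\<lambda>x. 2 * D x) (canonical V E ends w)"
  shows "\<exists>P\<in>even_subgraphs V E ends. lin_equiv V E ends len D (T_div V E ends w len P)"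
proof -
  have empty: "{} \<in> even_subgraphs V E ends" by (simp add: even_subgraphs_def deg_in_def)
  obtain g1 where g1: "rational_fun E ends len g1"
    and divg1: "(\<lambda>x. 2 * D x - canonical V E ends w x) = divf V E ends len g1"
    using K unfolding lin_equiv_def principal_def by blast
  define g where "g = (\<lambda>x. of_int 1 * g1 x + of_int 1 * tent len E x)"
  have g: "rational_fun E ends len g" unfolding g_def by (intro rational_fun_lincomb g1 rational_fun_tent)
  have "divf V E ends len g = (\<lambda>x. 1 * divf V E ends len g1 x + 1 * divf V E ends len (tent len E) x)"
    unfolding g_def by (rule divf_lincomb[OF g1 rational_fun_tent])
  then have "divf V E ends len g x = 2 * (D x - T_div V E ends w len {} x)" for x
    using fun_cong[OF divg1, of x] divf_tent_complement[OF empty, where w = w] by simp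
  then have ev: "even (divf V E ends len g x)" for x by simp
  define P where "P = {e\<in>E. odd (rslope (edge_fun ends len g e) 0)}"
  have P: "P \<in> even_subgraphs V E ends"
    unfolding P_def using odd_slope_edges_even_subgraph[OF g ev] .
  define f where "f = (\<lambda>x. (of_int 1 * g x + of_int (-1) * tent len P x) / 2)"
  have f: "rational_fun E ends len f"
    unfolding f_def using rational_fun_half_minus_tent[OF g ev P_def] .
  have "P \<subseteq> E" by (auto simp: P_def)
  then have "(\<lambda>x. of_int 2 * f x) = (\<lambda>x. of_int 1 * g1 x + of_int 1 * tent len (E - P) x)"
    by (simp add: f_def g_def tent_Diff fun_eq_iff)
  then have "(\<lambda>x. 2 * divf V E ends len f x) =
      (\<lambda>x. 1 * divf V E ends len g1 x + 1 * divf V E ends len (tent len (E - P)) x)"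
    by (metis divf_scale[OF f] divf_lincomb[OF g1 rational_fun_tent])
  then have "2 * divf V E ends len f x = 2 * (D x - T_div V E ends w len P x)" for x
    using fun_cong[OF divg1, of x] by (simp add: divf_tent_complement[OF P, where w = w] fun_eq_iff)
  then have "(\<lambda>x. D x - T_div V E ends w len P x) = divf V E ends len f"
    by (intro ext) (metis mult_cancel_left zero_neq_numeral)
  then show ?thesis using P f unfolding lin_equiv_def principal_def by blast
qed

end

theorem proposition3p2:
  fixes V :: "'v set" and E :: "'e set" and ends :: "'e \<Rightarrow> 'v \<times> 'v"
    and w :: "'v \<Rightarrow> nat" and len :: "'e \<Rightarrow> real" and P :: "'e set"
  assumes "tropical_curve V E ends w len"
    and "P \<in> even_subgraphs V E ends"
  shows "cls V E ends len (T_div V E ends w len P) \<in> theta_chars V E ends w len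
    \<and> bij_betw (\<lambda>Q. cls V E ends len (T_div V E ends w len Q))
           (even_subgraphs V E ends) (theta_chars V E ends w len)"
proof -
  interpret metric_graph V E ends len
    using assms(1) by (rule tropical_curve_imp_metric_graph)
  have "inj_on (\<lambda>Q. cls V E ends len (T_div V E ends w len Q)) (even_subgraphs V E ends)"
    by (intro inj_onI T_div_lin_equiv_imp_eq)
      (auto simp: cls_eq_iff[OF is_divisor_T_div])
  moreover have "theta_chars V E ends w len \<subseteq>
      (\<lambda>Q. cls V E ends len (T_div V E ends w len Q)) ` even_subgraphs V E ends"
  proof
    fix X assume "X \<in> theta_chars V E ends w len"
    then obtain D where X: "X = cls V E ends len D"
      and K: "lin_equiv V E ends len (\<lambda>x. 2 * D x) (canonical V E ends w)"
      unfolding theta_chars_def by blast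
    obtain Q where "Q \<in> even_subgraphs V E ends" "lin_equiv V E ends len D (T_div V E ends w len Q)"
      using theta_char_lin_equiv_T_div[OF K] by blast
    then show "X \<in> (\<lambda>Q. cls V E ends len (T_div V E ends w len Q)) ` even_subgraphs V E ends"
      unfolding X by (auto simp: cls_eq_iff[OF is_divisor_T_div])
  qed
  ultimately show ?thesis
    using T_div_theta_char assms(2) unfolding bij_betw_def by blast
qed

end
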